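(* Let $X$ be the compact symplectic toric manifold determined by a moment polytope $P\subset\mathbb{R}^n$. If the toric fiber $L(\mathbf{u})$ over an interior point $\mathbf{u}$ of $P$ is bulk-balanced, then $L(\mathbf{u})$ is strongly bulk-balanced.
   Context: $P=\bigcap_{j=1}^m\{\mathbf{u}:\ell_j(\mathbf{u})\ge0\}$, $\ell_j(\mathbf{u})=\langle\mathbf{u},\mathbf{v}_j\rangle-\lambda_j$, with $\mathbf{v}_j\in\mathbb{Z}^n$ primitive inward facet normals and non-redundant half-spaces. $L(\mathbf{u})$ is the Lagrangian torus fiber over $\mathbf{u}$. Leading term equations: for $\mathbf{u}\in\mathrm{Int}(P)$ let $S_1<S_2<\cdots$ be the distinct values of $\ell_j(\mathbf{u})$, $I_l=\{j:\ell_j(\mathbf{u})=S_l\}$, $A_l^\perp=\mathrm{span}_\mathbb{R}\{\mathbf{v}_j: j\in I_1\cup\dots\cup I_l\}$, $d_l=\dim A^\perp_l-\dim A^\perp_{l-1}$, $\kappa$ minimal with $A^\perp_\kappa=\mathbb{R}^n$. Choose $e^*_{r,s}\in\mathbb{Q}^n$ ($1\le r\le\kappa$, $1\le s\le d_r$) so that $\{e^*_{r,s}:r\le l\}$ is a $\mathbb{Q}$-basis of $A_l^\perp\cap\mathbb{Q}^n$ for each $l$ and each $\mathbf{v}_j\in\bigoplus\mathbb{Z}e^*_{r,s}$; write $\mathbf{y}^{\mathbf{v}_j}=\prod y_{r,s}^{v_j^{r,s}}$ where $\mathbf{v}_j=\sum v_j^{r,s}e^*_{r,s}$. For $c\in(\mathbb{C}^*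 )^m$ let $F_l^c=\sum_{j\in I_l}c_j\mathbf{y}^{\mathbf{v}_j}$; the generalized leading term equation is $y_{l,s}\partial F^c_l/\partial y_{l,s}=0$ ($1\le l\le\kappa$, $1\le s\le d_l$), and for $c=(1,\dots,1)$ it is called the leading term equation at $\mathbf{u}$ of $P$. (Solvability in $(\mathbb{C}^* )^n$ is independent of the choice of $e^*_{r,s}$.) $L(\mathbf{u})$ is strongly bulk-balanced if for some $c\in(\mathbb{C}^* )^m$ the generalized leading term equation at $\mathbf{u}$ of $P$ has a solution in $(\mathbb{C}^* )^n$. $L(\mathbf{u})$ is bulk-balanced if there is a sequence of triples $(\omega^{(i)},P^{(i)},\mathbf{u}^{(i)})$ such that: each $P^{(i)}$ is a polytope with the same normal fan as $P$ and $\omega^{(i)}$ the corresponding torus-invariant symplectic form on the same complex toric manifold, with $\omega^{(i)}\to\omega$; $P^{(i)}\to P$ in Hausdorff distance; $\mathbf{u}^{(i)}\in\mathrm{Int}(P^{(i)})$, $\mathbf{u}^{(i)}\to\mathbf{u}$; and for each $i$ the leading term equation at $\mathbf{u}^{(i)}$ of $P^{(i)}$ has a solution in $(\mathbb{C}^* )^n$. *)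

theory Defs
  imports "HOL-Analysis.Analysis"
begin

text \<open>Polytopes P = {u. for all j, <u, v j> - lam j >= 0} with facet data
  v :: 'm => real^'n (inward normals) and lam :: 'm => real, the index types
  'm (facets, m = CARD('m)) and 'n (coordinates, n = CARD('n)) being finite.\<close>

definition integral_vec :: "real^'n \<Rightarrow> bool" where
  "integral_vec x \<longleftrightarrow> (\<forall>i. x $ i \<in> \<int>)"

definition primitive_vec :: "real^'n \<Rightarrow> bool" where
  "primitive_vec x \<longleftrightarrow> integral_vec x \<and> x \<noteq> 0 \<and>
     (\<forall>(k::int) w. integral_vec w \<and> x = of_int k *\<^sub>R w \<longrightarrow> \<bar>k\<bar> = 1)"

definition ell :: "('m \<Rightarrow> real^'n) \<Rightarrow> ('m \<Rightarrow> real) \<Rightarrow> 'm \<Rightarrow> real^'n \<Rightarrow> real" where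
  "ell v lam j u = inner u (v j) - lam j"

definition halfspace_poly :: "('m \<Rightarrow> real^'n) \<Rightarrow> ('m \<Rightarrow> real) \<Rightarrow> (real^'n) set" where
  "halfspace_poly v lam = {u. \<forall>j. ell v lam j u \<ge> 0}"

definition nonredundant :: "('m \<Rightarrow> real^'n) \<Rightarrow> ('m \<Rightarrow> real) \<Rightarrow> bool" where
  "nonredundant v lam \<longleftrightarrow>
     (\<forall>j. {u. \<forall>i. i \<noteq> j \<longrightarrow> ell v lam i u \<ge> 0} \<noteq> halfspace_poly v lam)"

definition active :: "('m \<Rightarrow> real^'n) \<Rightarrow> ('m \<Rightarrow> real) \<Rightarrow> real^'n \<Rightarrow> 'm set" where
  "active v lam x = {j. ell v lam j x = 0}"

text \<open>Delzant (moment polytope of a compact symplectic toric manifold):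
  bounded, full-dimensional, primitive integral inward normals, non-redundant,
  and at each vertex the normals of the facets through it form a Z-basis of Z^n.\<close>
definition delzant :: "('m \<Rightarrow> real^'n) \<Rightarrow> ('m \<Rightarrow> real) \<Rightarrow> bool" where
  "delzant v lam \<longleftrightarrow>
     bounded (halfspace_poly v lam) \<and> interior (halfspace_poly v lam) \<noteq> {} \<and>
     (\<forall>j. primitive_vec (v j)) \<and> nonredundant v lam \<and>
     (\<forall>x. x extreme_point_of (halfspace_poly v lam) \<longrightarrow>
        (let J = active v lam x in
           inj_on v J \<and> card J = CARD('n) \<and> independent (v ` J) \<and>
           (\<forall>w. integral_vec w \<longrightarrow> (\<exists>a::'m \<Rightarrow> int. w = (\<Sum>j\<in>J. of_int (a j) *\<^sub>R v j)))))"

text \<open>Levels are indexed by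
  the value S_l itself (lev k = S_l means e_k = e*_{l,s} for some s), and
  a j k are the integer coordinates v_j = sum_k a j k e_k.\<close>
definition adapted_basis ::
  "('m \<Rightarrow> real^'n) \<Rightarrow> ('m \<Rightarrow> real) \<Rightarrow> real^'n \<Rightarrow>
   ('n \<Rightarrow> real^'n) \<Rightarrow> ('n \<Rightarrow> real) \<Rightarrow> ('m \<Rightarrow> 'n \<Rightarrow> int) \<Rightarrow> bool" where
  "adapted_basis v lam u e lev a \<longleftrightarrow>
     (\<forall>k i. e k $ i \<in> \<rat>) \<and> inj e \<and> independent (range e) \<and>
     (\<forall>k. lev k \<in> range (\<lambda>j. ell v lam j u)) \<and>
     (\<forall>t. span (e ` {k. lev k \<le> t}) = span (v ` {j. ell v lam j u \<le> t})) \<and>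
     (\<forall>j. v j = (\<Sum>k\<in>UNIV. of_int (a j k) *\<^sub>R e k))"

text \<open>y_{l,s} dF_l^c/dy_{l,s} = sum_{j in I_l} c_j v_j^{l,s} y^{v_j}\<close>
definition lte_solution ::
  "('m \<Rightarrow> real^'n) \<Rightarrow> ('m \<Rightarrow> real) \<Rightarrow> real^'n \<Rightarrow> ('m \<Rightarrow> complex) \<Rightarrow>
   ('n \<Rightarrow> real) \<Rightarrow> ('m \<Rightarrow> 'n \<Rightarrow> int) \<Rightarrow> ('n \<Rightarrow> complex) \<Rightarrow> bool" where
  "lte_solution v lam u c lev a y \<longleftrightarrow>
     (\<forall>k. y k \<noteq> 0) \<and>
     (\<forall>k. (\<Sum>j\<in>{j. ell v lam j u = lev k}.
            c j * of_int (a j k) * (\<Prod>k'\<in>UNIV. y k' powi a j k')) = 0)"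

definition gen_lte_solvable ::
  "('m \<Rightarrow> real^'n) \<Rightarrow> ('m \<Rightarrow> real) \<Rightarrow> real^'n \<Rightarrow> ('m \<Rightarrow> complex) \<Rightarrow> bool" where
  "gen_lte_solvable v lam u c \<longleftrightarrow>
     (\<exists>e lev a y. adapted_basis v lam u e lev a \<and> lte_solution v lam u c lev a y)"

definition lte_solvable :: "('m \<Rightarrow> real^'n) \<Rightarrow> ('m \<Rightarrow> real) \<Rightarrow> real^'n \<Rightarrow> bool" where
  "lte_solvable v lam u \<longleftrightarrow> gen_lte_solvable v lam u (\<lambda>_. 1)"

definition strongly_bulk_balanced :: "('m \<Rightarrow> real^'n) \<Rightarrow> ('m \<Rightarrow> real) \<Rightarrow> real^'n \<Rightarrow> bool" where
  "strongly_bulk_balanced v lam u \<longleftrightarrow>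
     (\<exists>c. (\<forall>j. c j \<noteq> 0) \<and> gen_lte_solvable v lam u c)"

definition normal_fan :: "('m \<Rightarrow> real^'n) \<Rightarrow> ('m \<Rightarrow> real) \<Rightarrow> (real^'n) set set" where
  "normal_fan v lam = {cone hull (v ` active v lam x) | x. x \<in> halfspace_poly v lam}"

definition hausdist :: "('a::metric_space) set \<Rightarrow> 'a set \<Rightarrow> real" where
  "hausdist A B = max (SUP a\<in>A. infdist a B) (SUP b\<in>B. infdist b A)"

text \<open>Any polytope with the same normal fan as P has the same primitive
  normals v, so it is halfspace_poly v lam' for some lam'.  The symplectic form
  omega' is determined by lam'; omega' -> omega is rendered as lam' -> lam.\<close>
definition bulk_balanced :: "('m \<Rightarrow> real^'n) \<Rightarrow> ('m \<Rightarrow> real) \<Rightarrow> real^'n \<Rightarrow> bool" where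
  "bulk_balanced v lam u \<longleftrightarrow>
     (\<exists>(lams :: nat \<Rightarrow> 'm \<Rightarrow> real) (us :: nat \<Rightarrow> real^'n).
        (\<forall>i. normal_fan v (lams i) = normal_fan v lam) \<and>
        (\<forall>j. (\<lambda>i. lams i j) \<longlonglongrightarrow> lam j) \<and>
        (\<lambda>i. hausdist (halfspace_poly v (lams i)) (halfspace_poly v lam)) \<longlonglongrightarrow> 0 \<and>
        (\<forall>i. us i \<in> interior (halfspace_poly v (lams i))) \<and>
        us \<longlonglongrightarrow> u \<and>
        (\<forall>i. lte_solvable v (lams i) (us i)))"

end

theory Submission
  imports Defs
begin

text \<open>Strict inequalities between the values \<open>\<ell>\<^sub>j\<close> are open conditions, so for an
  approximating pair \<open>(\<lambda>', u')\<close> close enough to \<open>(\<lambda>, u)\<close> the partition of the facets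
  by the values \<open>\<ell>\<^sub>j(u')\<close> refines the one by the values \<open>\<ell>\<^sub>j(u)\<close>. An adapted basis at
  \<open>u'\<close> stays adapted at \<open>u\<close> once each basis vector is given the coarse level containing
  its fine level. A solution \<open>y\<close> of the leading term equation at \<open>u'\<close> yields, for every
  facet \<open>j0\<close>, coefficients \<open>c\<close> supported on the coarse level of \<open>j0\<close> that solve the
  generalized equation at \<open>u\<close> with \<open>y = 1\<close> and \<open>c j0 \<noteq> 0\<close>: take \<open>c j = y^(v j)\<close> on the
  fine level of \<open>j0\<close> and cancel the resulting error, which only involves basis vectors
  of lower fine levels, by a combination of the normals of those levels. These \<open>c\<close> form
  a linear space, so a generic one has no zero coordinate.\<close>

lemma span_image_eq_sum:
  fixes f :: "'j \<Rightarrow> 'a::real_vector"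
  assumes "finite S" "x \<in> span (f ` S)"
  shows "\<exists>g. x = (\<Sum>j\<in>S. g j *\<^sub>R f j)"
proof -
  let ?C = "range (\<lambda>g. \<Sum>j\<in>S. g j *\<^sub>R f j)"
  have "subspace ?C"
    unfolding subspace_def
  proof safe
    show "0 \<in> ?C" by (rule range_eqI[of _ _ "\<lambda>_. 0"]) simp
    fix g h show "(\<Sum>j\<in>S. g j *\<^sub>R f j) + (\<Sum>j\<in>S. h j *\<^sub>R f j) \<in> ?C"
      by (rule range_eqI[of _ _ "\<lambda>j. g j + h j"]) (simp add: scaleR_add_left sum.distrib)
  next
    fix c :: real and g show "c *\<^sub>R (\<Sum>j\<in>S. g j *\<^sub>R f j) \<in> ?C"
      by (rule range_eqI[of _ _ "\<lambda>j. c * g j"]) (simp add: scaleR_sum_right)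
  qed
  moreover have "f ` S \<subseteq> ?C"
  proof
    fix x assume "x \<in> f ` S"
    then obtain i where "i \<in> S" "x = f i" by blast
    then show "x \<in> ?C"
      using assms(1) by (intro range_eqI[of _ _ "\<lambda>j. if j = i then 1 else 0"]) (simp add: if_distrib[of "\<lambda>r. r *\<^sub>R _"] cong: if_cong)
  qed
  ultimately show ?thesis using span_minimal assms(2) by blast
qed

lemma independent_range_coeffs_unique:
  fixes e :: "'k::finite \<Rightarrow> 'a::real_vector"
  assumes "inj e" "independent (range e)"
    and "(\<Sum>k\<in>UNIV. f k *\<^sub>R e k) = (\<Sum>k\<in>UNIV. g k *\<^sub>R e k)"
  shows "f = g"
proof -
  have "(\<Sum>x\<in>range e. (f (inv e x) - g (inv e x)) *\<^sub>R x) = (\<Sum>k\<in>UNIV. (f k - g k) *\<^sub>R e k)"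
    using assms(1) by (simp add: sum.reindex)
  also have "\<dots> = 0" using assms(3) by (simp add: scaleR_diff_left sum_subtractf)
  finally have combination_0: "(\<Sum>x\<in>range e. (f (inv e x) - g (inv e x)) *\<^sub>R x) = 0" .
  have "\<forall>c. (\<Sum>x\<in>range e. c x *\<^sub>R x) = 0 \<longrightarrow> (\<forall>x\<in>range e. c x = 0)"
    using assms(2) finite unfolding independent_explicit_finite_subsets by blast
  from this[rule_format, OF combination_0]
  have "\<forall>x\<in>range e. f (inv e x) - g (inv e x) = 0" by blast
  then show ?thesis using assms(1) by (auto simp: fun_eq_iff)
qed

lemma adapted_basis_coeff_eq_0:
  fixes v :: "'m::finite \<Rightarrow> real^'n::finite"
  assumes ab: "adapted_basis v lam u e lev a" and lt: "ell v lam j u < lev k"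
  shows "a j k = 0"
proof -
  from ab have inj: "inj e" and ind: "independent (range e)"
    and spn: "\<And>t. span (e ` {k. lev k \<le> t}) = span (v ` {j. ell v lam j u \<le> t})"
    and vexp: "v j = (\<Sum>k\<in>UNIV. of_int (a j k) *\<^sub>R e k)"
    unfolding adapted_basis_def by auto
  have "v j \<in> span (e ` {k. lev k \<le> ell v lam j u})"
    unfolding spn by (rule span_base) blast
  then obtain g where "v j = (\<Sum>k\<in>{k. lev k \<le> ell v lam j u}. g k *\<^sub>R e k)"
    using span_image_eq_sum[OF finite] by metis
  then have "(\<Sum>k\<in>UNIV. of_int (a j k) *\<^sub>R e k) =
      (\<Sum>k\<in>UNIV. (if lev k \<le> ell v lam j u then g k else 0) *\<^sub>R e k)"
    using vexp by (simp add: if_distrib[of "\<lambda>r. r *\<^sub>R _"] sum.inter_filter[symmetric] cong: if_cong)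
  then have "(\<lambda>k. real_of_int (a j k)) = (\<lambda>k. if lev k \<le> ell v lam j u then g k else 0)"
    by (rule independent_range_coeffs_unique[OF inj ind])
  then have "real_of_int (a j k) = (if lev k \<le> ell v lam j u then g k else 0)"
    by (simp add: fun_eq_iff)
  then show ?thesis using lt by simp
qed

lemma adapted_basis_dual_combination:
  fixes v :: "'m::finite \<Rightarrow> real^'n::finite"
  assumes ab: "adapted_basis v lam u e lev a"
  shows "\<exists>\<gamma>::'m \<Rightarrow> real. (\<forall>j. lev k < ell v lam j u \<longrightarrow> \<gamma> j = 0) \<and>
    (\<forall>k'. (\<Sum>j\<in>UNIV. \<gamma> j * of_int (a j k')) = (if k' = k then 1 else 0))"
proof -
  from ab have inj: "inj e" and ind: "independent (range e)"
    and spn: "\<And>t. span (e ` {k. lev k \<le> t}) = span (v ` {j. ell v lam j u \<le> t})"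
    and vexp: "\<And>j. v j = (\<Sum>k\<in>UNIV. of_int (a j k) *\<^sub>R e k)"
    unfolding adapted_basis_def by auto
  have "e k \<in> span (v ` {j. ell v lam j u \<le> lev k})"
    unfolding spn[symmetric] by (rule span_base) blast
  then obtain g where "e k = (\<Sum>j\<in>{j. ell v lam j u \<le> lev k}. g j *\<^sub>R v j)"
    using span_image_eq_sum[OF finite] by metis
  define \<gamma> where "\<gamma> j = (if ell v lam j u \<le> lev k then g j else 0)" for j
  have "(\<Sum>k'\<in>UNIV. (if k' = k then 1 else 0) *\<^sub>R e k') = e k"
    by (simp add: if_distrib[of "\<lambda>r. r *\<^sub>R _"] cong: if_cong)
  also have "e k = (\<Sum>j\<in>UNIV. \<gamma> j *\<^sub>R v j)"
    using \<open>e k = _\<close> unfolding \<gamma>_def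
    by (simp add: if_distrib[of "\<lambda>r. r *\<^sub>R _"] sum.inter_filter[symmetric] cong: if_cong)
  also have "\<dots> = (\<Sum>k'\<in>UNIV. (\<Sum>j\<in>UNIV. \<gamma> j * of_int (a j k')) *\<^sub>R e k')"
    by (simp add: vexp scaleR_sum_right scaleR_sum_left) (rule sum.swap)
  finally have "(\<lambda>k'. if k' = k then 1 else 0) = (\<lambda>k'. \<Sum>j\<in>UNIV. \<gamma> j * of_int (a j k'))"
    by (rule independent_range_coeffs_unique[OF inj ind])
  then show ?thesis
    by (intro exI[of _ \<gamma>]) (auto simp: \<gamma>_def fun_eq_iff)
qed

lemma adapted_basis_solve_lower_levels:
  fixes v :: "'m::finite \<Rightarrow> real^'n::finite" and x :: "'n \<Rightarrow> complex"
  assumes ab: "adapted_basis v lam u e lev a" and x0: "\<And>k. s \<le> lev k \<Longrightarrow> x k = 0"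
  shows "\<exists>\<beta>. (\<forall>j. s \<le> ell v lam j u \<longrightarrow> \<beta> j = 0) \<and>
    (\<forall>k. (\<Sum>j\<in>UNIV. \<beta> j * of_int (a j k)) = x k)"
proof -
  have "\<forall>k. \<exists>\<gamma>::'m \<Rightarrow> real. (\<forall>j. lev k < ell v lam j u \<longrightarrow> \<gamma> j = 0) \<and>
    (\<forall>k'. (\<Sum>j\<in>UNIV. \<gamma> j * of_int (a j k')) = (if k' = k then 1 else 0))"
    using adapted_basis_dual_combination[OF ab] by blast
  from choice[OF this] obtain \<Gamma> :: "'n \<Rightarrow> 'm \<Rightarrow> real" where \<Gamma>: "\<forall>k. (\<forall>j. lev k < ell v lam j u \<longrightarrow> \<Gamma> k j = 0) \<and>
    (\<forall>k'. (\<Sum>j\<in>UNIV. \<Gamma> k j * of_int (a j k')) = (if k' = k then 1 else 0))"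
    by blast
  then have \<Gamma>0: "\<And>k j. lev k < ell v lam j u \<Longrightarrow> \<Gamma> k j = 0"
    and \<Gamma>dual: "\<And>k k'. (\<Sum>j\<in>UNIV. \<Gamma> k j * of_int (a j k')) = (if k' = k then 1 else 0)"
    by blast+
  define \<beta> where "\<beta> j = (\<Sum>k\<in>{k. lev k < s}. x k * of_real (\<Gamma> k j))" for j
  have "(\<Sum>j\<in>UNIV. \<beta> j * of_int (a j k')) = x k'" for k'
  proof -
    have "(\<Sum>j\<in>UNIV. \<beta> j * of_int (a j k')) =
        (\<Sum>j\<in>UNIV. \<Sum>k\<in>{k. lev k < s}. x k * of_real (\<Gamma> k j * of_int (a j k')))"
      unfolding \<beta>_def by (simp add: sum_distrib_right mult.assoc)
    also have "\<dots> = (\<Sum>k\<in>{k. lev k < s}. x k * of_real (\<Sum>j\<in>UNIV. \<Gamma> k j * of_int (a j k')))"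
      by (subst sum.swap) (simp add: sum_distrib_left)
    also have "\<dots> = (if lev k' < s then x k' else 0)"
      by (simp add: \<Gamma>dual if_distrib[of complex_of_real] if_distrib[of "\<lambda>z. _ * z"] sum.inter_filter[symmetric] cong: if_cong)
    also have "\<dots> = x k'" using x0[of k'] by simp
    finally show ?thesis .
  qed
  moreover have "\<beta> j = 0" if "s \<le> ell v lam j u" for j
    unfolding \<beta>_def using that by (intro sum.neutral) (auto intro: \<Gamma>0)
  ultimately show ?thesis by blast
qed

lemma ex_nowhere_zero_in_subspace:
  fixes V :: "('i::finite \<Rightarrow> 'a::field_char_0) set"
  assumes add: "\<And>x z. x \<in> V \<Longrightarrow> z \<in> V \<Longrightarrow> (\<lambda>i. x i + z i) \<in> V"
    and scale: "\<And>x t. x \<in> V \<Longrightarrow> (\<lambda>i. t * x i) \<in> V"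
    and nonzero: "\<And>i. \<exists>x\<in>V. x i \<noteq> 0"
  shows "\<exists>x\<in>V. \<forall>i. x i \<noteq> 0"
proof -
  have "\<exists>x\<in>V. \<forall>i\<in>I. x i \<noteq> 0" if "finite I" for I
    using that
  proof (induction I rule: finite_induct)
    case empty
    then show ?case using nonzero by blast
  next
    case (insert i0 I)
    then obtain x where x: "x \<in> V" "\<forall>i\<in>I. x i \<noteq> 0" by blast
    obtain w where w: "w \<in> V" "w i0 \<noteq> 0" using nonzero by blast
    \<comment> \<open>\<open>x + t w\<close> has a zero coordinate in \<open>insert i0 I\<close> only for finitely many \<open>t\<close>.\<close>
    have "finite ((\<lambda>i. - x i / w i) ` insert i0 I)" using insert.hyps(1) by simp
    then obtain t where t: "t \<notin> (\<lambda>i. - x i / w i) ` insert i0 I"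
      using ex_new_if_finite[OF infinite_UNIV_char_0] by blast
    have "x i + t * w i \<noteq> 0" if i: "i \<in> insert i0 I" for i
    proof (cases "w i = 0")
      case True
      with i w x show ?thesis by auto
    next
      case False
      show ?thesis
      proof
        assume "x i + t * w i = 0"
        then have "t = - x i / w i" using False by (simp add: field_simps add_eq_0_iff)
        then show False using t i by blast
      qed
    qed
    moreover have "(\<lambda>i. x i + t * w i) \<in> V" using add[OF x(1) scale[OF w(1)]] .
    ultimately show ?case by (intro bexI[of _ "\<lambda>i. x i + t * w i"]) auto
  qed
  from this[of UNIV] show ?thesis by simp
qed

lemma lte_solution_at_one_iff:
  "lte_solution v lam u c lev a (\<lambda>_. 1) \<longleftrightarrow>
    (\<forall>k. (\<Sum>j\<in>{j. ell v lam j u = lev k}. c j * of_int (a j k)) = 0)"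
  by (simp add: lte_solution_def)

locale refined_levels =
  fixes v :: "'m::finite \<Rightarrow> real^'n::finite" and lam lam' :: "'m \<Rightarrow> real" and u u' :: "real^'n"
    and e :: "'n \<Rightarrow> real^'n" and lev :: "'n \<Rightarrow> real" and a :: "'m \<Rightarrow> 'n \<Rightarrow> int"
  assumes adapted: "adapted_basis v lam' u' e lev a"
    and refines: "\<And>j j'. ell v lam j u < ell v lam j' u \<Longrightarrow> ell v lam' j u' < ell v lam' j' u'"
begin

abbreviation coarse_ell :: "'m \<Rightarrow> real" where "coarse_ell j \<equiv> ell v lam j u"
abbreviation fine_ell :: "'m \<Rightarrow> real" where "fine_ell j \<equiv> ell v lam' j u'"

lemma coarse_ell_mono: "fine_ell j \<le> fine_ell j' \<Longrightarrow> coarse_ell j \<le> coarse_ell j'"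
  using refines[of j' j] by fastforce

definition level_rep :: "'n \<Rightarrow> 'm" where "level_rep k = (SOME j. fine_ell j = lev k)"

lemma fine_ell_level_rep: "fine_ell (level_rep k) = lev k"
proof -
  have "lev k \<in> range fine_ell" using adapted unfolding adapted_basis_def by blast
  then show ?thesis unfolding level_rep_def by (metis (mono_tags, lifting) imageE someI)
qed

definition coarse_lev :: "'n \<Rightarrow> real" where "coarse_lev k = coarse_ell (level_rep k)"

lemma coarse_sublevel_is_fine_sublevel: "\<exists>t'. \<forall>j. coarse_ell j \<le> t \<longleftrightarrow> fine_ell j \<le> t'"
proof (cases "{j. coarse_ell j \<le> t} = {}")
  case True
  have Min_le_fine: "Min (range fine_ell) \<le> fine_ell j" for j
    by (rule Min_le) (simp_all add: finite_imageI[OF finite])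
  have "\<not> fine_ell j \<le> Min (range fine_ell) - 1" for j
    using Min_le_fine[of j] by linarith
  with True show ?thesis by blast
next
  case False
  define t' where "t' = Max (fine_ell ` {j. coarse_ell j \<le> t})"
  have "coarse_ell j \<le> t \<longleftrightarrow> fine_ell j \<le> t'" for j
  proof
    assume "coarse_ell j \<le> t"
    then show "fine_ell j \<le> t'" unfolding t'_def by (intro Max_ge) auto
  next
    assume j: "fine_ell j \<le> t'"
    have "t' \<in> fine_ell ` {j. coarse_ell j \<le> t}" unfolding t'_def using False by (intro Max_in) auto
    then obtain j' where "coarse_ell j' \<le> t" "t' = fine_ell j'" by blast
    with j show "coarse_ell j \<le> t" using coarse_ell_mono[of j j'] by simp
  qed
  then show ?thesis by blast
qed

lemma adapted_basis_coarse_lev: "adapted_basis v lam u e coarse_lev a"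
proof -
  have "span (e ` {k. coarse_lev k \<le> t}) = span (v ` {j. coarse_ell j \<le> t})" for t
  proof -
    obtain t' where t': "\<And>j. coarse_ell j \<le> t \<longleftrightarrow> fine_ell j \<le> t'"
      using coarse_sublevel_is_fine_sublevel by blast
    have "span (e ` {k. lev k \<le> t'}) = span (v ` {j. fine_ell j \<le> t'})"
      using adapted unfolding adapted_basis_def by blast
    then show ?thesis by (simp add: coarse_lev_def t' fine_ell_level_rep)
  qed
  then show ?thesis
    using adapted unfolding adapted_basis_def coarse_lev_def by auto
qed

lemma coarse_solution_nonzero_at:
  assumes sol: "lte_solution v lam' u' (\<lambda>_. 1) lev a y"
  shows "\<exists>c. lte_solution v lam u c coarse_lev a (\<lambda>_. 1) \<and> c j0 \<noteq> 0"
proof -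
  define s where "s = fine_ell j0"
  define Y where "Y j = (\<Prod>k\<in>UNIV. y k powi a j k)" for j
  define x where "x k = (\<Sum>j\<in>{j. fine_ell j = s}. Y j * of_int (a j k))" for k
  have x0: "x k = 0" if "s \<le> lev k" for k
  proof (cases "lev k = s")
    case True
    have "(\<Sum>j\<in>{j. fine_ell j = lev k}. 1 * of_int (a j k) * Y j) = 0"
      using sol unfolding lte_solution_def Y_def by blast
    with True show ?thesis unfolding x_def by (simp add: mult.commute)
  next
    case False
    with that have "a j k = 0" if "fine_ell j = s" for j
      using adapted_basis_coeff_eq_0[OF adapted] that by simp
    then show ?thesis unfolding x_def by simp
  qed
  obtain \<beta> where "(\<forall>j. s \<le> fine_ell j \<longrightarrow> \<beta> j = 0) \<and>
      (\<forall>k. (\<Sum>j\<in>UNIV. \<beta> j * of_int (a j k)) = x k)"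
    using adapted_basis_solve_lower_levels[OF adapted x0] by (rule exE)
  then have \<beta>0: "\<And>j. s \<le> fine_ell j \<Longrightarrow> \<beta> j = 0"
    and \<beta>x: "\<And>k. (\<Sum>j\<in>UNIV. \<beta> j * of_int (a j k)) = x k"
    by simp_all
  define c where "c j = (if coarse_ell j = coarse_ell j0 then (if fine_ell j = s then Y j else 0) - \<beta> j else 0)" for j
  have "(\<Sum>j\<in>{j. coarse_ell j = coarse_lev k}. c j * of_int (a j k)) = 0" for k
  proof (cases "coarse_lev k = coarse_ell j0")
    case False
    then show ?thesis unfolding c_def by simp
  next
    case True
    have fine_s: "fine_ell j = s \<Longrightarrow> coarse_ell j = coarse_ell j0" for j
      using coarse_ell_mono[of j j0] coarse_ell_mono[of j0 j] unfolding s_def by simp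
    \<comment> \<open>\<open>\<beta>\<close> lives on fine levels below \<open>s\<close>; off the coarse level of \<open>j0\<close> those lie strictly below \<open>lev k\<close>.\<close>
    have off_level: "\<beta> j * of_int (a j k) = 0" if "coarse_ell j \<noteq> coarse_ell j0" for j
    proof (cases "s \<le> fine_ell j")
      case False
      then have "coarse_ell j < coarse_ell (level_rep k)"
        using coarse_ell_mono[of j j0] that True unfolding s_def coarse_lev_def by simp
      then have "fine_ell j < lev k" using refines fine_ell_level_rep by metis
      then show ?thesis using adapted_basis_coeff_eq_0[OF adapted] by simp
    qed (simp add: \<beta>0)
    have "(\<Sum>j\<in>{j. coarse_ell j = coarse_lev k}. c j * of_int (a j k)) =
        (\<Sum>j\<in>{j. coarse_ell j = coarse_ell j0}. (if fine_ell j = s then Y j * of_int (a j k) else 0)) -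
        (\<Sum>j\<in>{j. coarse_ell j = coarse_ell j0}. \<beta> j * of_int (a j k))"
      unfolding True c_def by (simp add: left_diff_distrib sum_subtractf if_distrib[of "\<lambda>z. z * _"] cong: if_cong)
    also have "(\<Sum>j\<in>{j. coarse_ell j = coarse_ell j0}. (if fine_ell j = s then Y j * of_int (a j k) else 0)) = x k"
      unfolding x_def using fine_s by (intro sum.mono_neutral_cong_right) auto
    also have "(\<Sum>j\<in>{j. coarse_ell j = coarse_ell j0}. \<beta> j * of_int (a j k)) = x k"
      unfolding \<beta>x[symmetric] using off_level by (intro sum.mono_neutral_left) auto
    finally show ?thesis by simp
  qed
  moreover have "c j0 \<noteq> 0"
    using \<beta>0[of j0] sol unfolding c_def s_def Y_def lte_solution_def by simp
  ultimately show ?thesis unfolding lte_solution_at_one_iff by blast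
qed

lemma strongly_bulk_balanced_of_lte_solution:
  assumes "lte_solution v lam' u' (\<lambda>_. 1) lev a y"
  shows "strongly_bulk_balanced v lam u"
proof -
  let ?V = "{c. lte_solution v lam u c coarse_lev a (\<lambda>_. 1)}"
  have "\<exists>c\<in>?V. \<forall>j. c j \<noteq> 0"
  proof (rule ex_nowhere_zero_in_subspace)
    show "(\<lambda>j. c j + d j) \<in> ?V" if "c \<in> ?V" "d \<in> ?V" for c d
      using that by (simp add: lte_solution_at_one_iff distrib_right sum.distrib)
    show "(\<lambda>j. t * c j) \<in> ?V" if "c \<in> ?V" for c t
      using that by (simp add: lte_solution_at_one_iff mult.assoc flip: sum_distrib_left)
    show "\<exists>c\<in>?V. c j \<noteq> 0" for j
      using coarse_solution_nonzero_at[OF assms] by blast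
  qed
  then show ?thesis
    using adapted_basis_coarse_lev
    unfolding strongly_bulk_balanced_def gen_lte_solvable_def by blast
qed

end

lemma eventually_strict_order_preserved:
  fixes v :: "'m::finite \<Rightarrow> real^'n::finite"
  assumes lams: "\<And>j. (\<lambda>i. lams i j) \<longlonglongrightarrow> lam j" and us: "us \<longlonglongrightarrow> u"
  shows "eventually (\<lambda>i. \<forall>j j'. ell v lam j u < ell v lam j' u \<longrightarrow>
    ell v (lams i) j (us i) < ell v (lams i) j' (us i)) sequentially"
proof -
  have gap: "(\<lambda>i. ell v (lams i) j' (us i) - ell v (lams i) j (us i)) \<longlonglongrightarrow> ell v lam j' u - ell v lam j u"
    for j j' unfolding ell_def by (intro tendsto_intros lams us)
  have "eventually (\<lambda>i. ell v lam j u < ell v lam j' u \<longrightarrow>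
      ell v (lams i) j (us i) < ell v (lams i) j' (us i)) sequentially" for j j'
  proof (cases "ell v lam j u < ell v lam j' u")
    case True
    then have "eventually (\<lambda>i. 0 < ell v (lams i) j' (us i) - ell v (lams i) j (us i)) sequentially"
      by (intro order_tendstoD(1)[OF gap]) simp
    then show ?thesis by (rule eventually_mono) simp
  qed simp
  then show ?thesis by (intro eventually_all_finite)
qed

theorem theoremB:
  fixes v :: "'m::finite \<Rightarrow> real^'n::finite" and lam :: "'m \<Rightarrow> real" and u :: "real^'n"
  assumes "delzant v lam"
    and "u \<in> interior (halfspace_poly v lam)"
    and "bulk_balanced v lam u"
  shows "strongly_bulk_balanced v lam u"
proof -
  from assms(3) obtain lams :: "nat \<Rightarrow> 'm \<Rightarrow> real" and us :: "nat \<Rightarrow> real^'n" where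
    lams: "\<And>j. (\<lambda>i. lams i j) \<longlonglongrightarrow> lam j" and us: "us \<longlonglongrightarrow> u"
    and solvable: "\<And>i. lte_solvable v (lams i) (us i)"
    unfolding bulk_balanced_def by blast
  obtain N where "\<forall>i\<ge>N. \<forall>j j'. ell v lam j u < ell v lam j' u \<longrightarrow>
      ell v (lams i) j (us i) < ell v (lams i) j' (us i)"
    using eventually_strict_order_preserved[OF lams us, of v] unfolding eventually_sequentially ..
  then have refines: "\<And>j j'. ell v lam j u < ell v lam j' u \<Longrightarrow>
      ell v (lams N) j (us N) < ell v (lams N) j' (us N)"
    by blast
  from solvable[of N] obtain e lev a y where adapted: "adapted_basis v (lams N) (us N) e lev a"
    and sol: "lte_solution v (lams N) (us N) (\<lambda>_. 1) lev a y"
    unfolding lte_solvable_def gen_lte_solvable_def by blast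
  interpret refined_levels v lam "lams N" u "us N" e lev a
    using adapted refines by unfold_locales
  show ?thesis using sol by (rule strongly_bulk_balanced_of_lte_solution)
qed

end
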